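(* If $G$ is a connected locally Dirac graph of order $n \ge 3$, then $\lambda(G) = \delta(G)$.
   Context: $\lambda(G)$ is the edge-connectivity (minimum number of edges whose removal disconnects $G$ or leaves the trivial graph) and $\delta(G)$ the minimum degree. A graph $G$ is locally Dirac if for every vertex $v \in V(G)$ and every $u \in N(v)$, $\deg_{\langle N(v)\rangle}(u) \ge \deg_G(v)/2$, where $N(v)$ is the open neighbourhood of $v$ and $\langle N(v)\rangle$ the subgraph induced by it. *)

theory Defs
  imports Main
begin

definition simple_graph :: "'a set \<Rightarrow> 'a set set \<Rightarrow> bool" where
  "simple_graph V E \<longleftrightarrow> finite V \<and> (\<forall>e\<in>E. e \<subseteq> V \<and> card e = 2)"

definition nbhd :: "'a set set \<Rightarrow> 'a \<Rightarrow> 'a set" where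
  "nbhd E v = {u. {u, v} \<in> E}"

definition degree :: "'a set set \<Rightarrow> 'a \<Rightarrow> nat" where
  "degree E v = card (nbhd E v)"

definition induced_edges :: "'a set set \<Rightarrow> 'a set \<Rightarrow> 'a set set" where
  "induced_edges E S = {e \<in> E. e \<subseteq> S}"

definition min_degree :: "'a set \<Rightarrow> 'a set set \<Rightarrow> nat" where
  "min_degree V E = Min (degree E ` V)"

fun is_walk :: "'a set \<Rightarrow> 'a set set \<Rightarrow> 'a list \<Rightarrow> bool" where
  "is_walk V E [] = False"
| "is_walk V E [x] = (x \<in> V)"
| "is_walk V E (x # y # xs) = (x \<in> V \<and> {x, y} \<in> E \<and> is_walk V E (y # xs))"

definition connected_graph :: "'a set \<Rightarrow> 'a set set \<Rightarrow> bool" where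
  "connected_graph V E \<longleftrightarrow> V \<noteq> {} \<and>
     (\<forall>u\<in>V. \<forall>v\<in>V. \<exists>p. is_walk V E p \<and> hd p = u \<and> last p = v)"

definition edge_connectivity :: "'a set \<Rightarrow> 'a set set \<Rightarrow> nat" where
  "edge_connectivity V E =
     Min {card F | F. F \<subseteq> E \<and> (\<not> connected_graph V (E - F) \<or> card V \<le> 1)}"

definition locally_dirac :: "'a set \<Rightarrow> 'a set set \<Rightarrow> bool" where
  "locally_dirac V E \<longleftrightarrow>
     (\<forall>v\<in>V. \<forall>u\<in>nbhd E v.
        2 * degree (induced_edges E (nbhd E v)) u \<ge> degree E v)"

end

theory Submission
  imports Defs
begin

text \<open>Deleting the edges at a vertex of minimum degree disconnects G, so \<open>\<lambda>(G) \<le> \<delta>(G)\<close>.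
  Conversely let F be a disconnecting edge set, S a union of components of G - F, and
  \<open>uv\<close> an edge of G with \<open>u \<in> S\<close>, \<open>v \<notin> S\<close>. Since u and v have a common neighbour,
  one of them, w, has at least two neighbours on the other side of the cut \<open>\<partial>X\<close> (X the side
  of w). If w has a neighbours across and b on its own side, either every neighbour of w on
  its own side is adjacent to one across (when \<open>deg w \<le> 2a\<close>), giving \<open>deg w\<close> distinct cut edges,
  or each of the a neighbours across has at least \<open>deg w / 2 - a + 1\<close> neighbours among the b
  (when \<open>deg w > 2a\<close>), and counting these cut edges gives
  \<open>a (deg w / 2 - a + 2) \<ge> deg w\<close> because \<open>a \<ge> 2\<close>. Hence \<open>|F| \<ge> |\<partial>X| \<ge> \<delta>(G)\<close>.\<close>

lemma simple_graph_edgeD: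
  assumes "simple_graph V E" "{x, y} \<in> E"
  shows "x \<in> V" "y \<in> V" "x \<noteq> y"
proof -
  have "{x, y} \<subseteq> V" "card {x, y} = 2" using assms unfolding simple_graph_def by auto
  then show "x \<in> V" "y \<in> V" "x \<noteq> y" by auto
qed

lemma simple_graph_edge_eq:
  assumes "simple_graph V E" "e \<in> E" "x \<in> e" "y \<in> e" "x \<noteq> y"
  shows "e = {x, y}"
proof -
  have "card e = 2" using assms(1,2) unfolding simple_graph_def by auto
  then obtain a b where "e = {a, b}" by (meson card_2_iff)
  then show ?thesis using assms(3-5) by auto
qed

lemma simple_graph_Diff: "simple_graph V E \<Longrightarrow> simple_graph V (E - F)"
  unfolding simple_graph_def by auto

lemma simple_graph_finite_edges:
  assumes "simple_graph V E"
  shows "finite E"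
proof -
  have "E \<subseteq> Pow V" "finite V" using assms unfolding simple_graph_def by auto
  then show ?thesis by (meson finite_Pow_iff finite_subset)
qed

lemma nbhd_subset: "simple_graph V E \<Longrightarrow> nbhd E v \<subseteq> V"
  using simple_graph_edgeD unfolding nbhd_def by fastforce

lemma finite_nbhd: "simple_graph V E \<Longrightarrow> finite (nbhd E v)"
  using nbhd_subset unfolding simple_graph_def by (meson finite_subset)

lemma not_in_nbhd_self: "simple_graph V E \<Longrightarrow> x \<notin> nbhd E x"
  unfolding nbhd_def simple_graph_def by force

lemma min_degree_le: "simple_graph V E \<Longrightarrow> w \<in> V \<Longrightarrow> min_degree V E \<le> degree E w"
  unfolding simple_graph_def min_degree_def by simp

lemma locally_dirac_common_nbhd:
  assumes "locally_dirac V E" "w \<in> V" "x \<in> nbhd E w"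
  shows "degree E w \<le> 2 * card (nbhd E x \<inter> nbhd E w)"
proof -
  have "nbhd (induced_edges E (nbhd E w)) x = nbhd E x \<inter> nbhd E w"
    using assms(3) unfolding nbhd_def induced_edges_def by auto
  then show ?thesis using assms unfolding locally_dirac_def degree_def by force
qed

definition cut_edges :: "'a set set \<Rightarrow> 'a set \<Rightarrow> 'a set set" where
  "cut_edges E X = {e \<in> E. \<exists>x\<in>e. \<exists>y\<in>e. x \<in> X \<and> y \<notin> X}"

lemma finite_cut_edges: "simple_graph V E \<Longrightarrow> finite (cut_edges E X)"
  using simple_graph_finite_edges unfolding cut_edges_def by force

lemma doubleton_in_cut_edges: "{x, y} \<in> E \<Longrightarrow> x \<in> X \<Longrightarrow> y \<notin> X \<Longrightarrow> {x, y} \<in> cut_edges E X"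
  unfolding cut_edges_def by auto

lemma cut_edges_complement: "simple_graph V E \<Longrightarrow> cut_edges E (V - X) = cut_edges E X"
  unfolding cut_edges_def simple_graph_def by blast

lemma cut_edges_subset_if_closed:
  assumes "simple_graph V E" and closed: "\<And>x y. x \<in> S \<Longrightarrow> {x, y} \<in> E - F \<Longrightarrow> y \<in> S"
  shows "cut_edges E S \<subseteq> F"
proof
  fix e assume "e \<in> cut_edges E S"
  then obtain x y where "e \<in> E" "x \<in> e" "y \<in> e" "x \<in> S" "y \<notin> S" unfolding cut_edges_def by auto
  moreover from this have "e = {x, y}" using simple_graph_edge_eq[OF assms(1)] by blast
  ultimately show "e \<in> F" using closed by blast
qed

lemma degree_le_card_cut_edges_if_matched:
  assumes sg: "simple_graph V E" and "w \<in> X"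
    and matched: "\<forall>y \<in> nbhd E w \<inter> X. \<exists>z \<in> nbhd E w - X. {y, z} \<in> E"
  shows "degree E w \<le> card (cut_edges E X)"
proof -
  define A where "A = nbhd E w - X"
  obtain f where f: "\<forall>y \<in> nbhd E w \<inter> X. f y \<in> A \<and> {y, f y} \<in> E"
    using matched unfolding A_def by metis
  define g where "g z = (if z \<in> A then {w, z} else {z, f z})" for z
  have "w \<notin> nbhd E w" using not_in_nbhd_self[OF sg] .
  then have "inj_on g (nbhd E w)"
    using f unfolding inj_on_def g_def A_def by (auto simp: doubleton_eq_iff)
  moreover have "g ` nbhd E w \<subseteq> cut_edges E X"
  proof
    fix e assume "e \<in> g ` nbhd E w"
    then obtain z where z: "z \<in> nbhd E w" "e = g z" by auto
    show "e \<in> cut_edges E X"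
    proof (cases "z \<in> A")
      case True
      then have "{w, z} \<in> E" using z(1) unfolding nbhd_def by (simp add: insert_commute)
      then show ?thesis using True z assms(2) doubleton_in_cut_edges
        unfolding g_def A_def by auto
    next
      case False
      then have "z \<in> X" using z(1) unfolding A_def by blast
      then have "{z, f z} \<in> E" "f z \<notin> X" using f z(1) unfolding A_def by auto
      then show ?thesis using False z(2) \<open>z \<in> X\<close> doubleton_in_cut_edges unfolding g_def by simp
    qed
  qed
  ultimately show ?thesis
    unfolding degree_def using card_inj_on_le finite_cut_edges[OF sg] by blast
qed

lemma card_cut_edges_ge_nbhd_count:
  assumes sg: "simple_graph V E" and "w \<in> X"
  shows "card (nbhd E w - X) + (\<Sum>x \<in> nbhd E w - X. card (nbhd E x \<inter> (nbhd E w \<inter> X)))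
           \<le> card (cut_edges E X)"
proof -
  define A where "A = nbhd E w - X"
  define P where "P = Sigma A (\<lambda>x. nbhd E x \<inter> (nbhd E w \<inter> X))"
  have finA: "finite A" using finite_nbhd[OF sg] unfolding A_def by simp
  have finP: "finite P" using finA finite_nbhd[OF sg] unfolding P_def by auto
  have cardP: "card P = (\<Sum>x\<in>A. card (nbhd E x \<inter> (nbhd E w \<inter> X)))"
    using finA finite_nbhd[OF sg] unfolding P_def by (simp add: card_SigmaI)
  define h where "h p = {fst p, snd p}" for p :: "'a \<times> 'a"
  have "w \<notin> nbhd E w" using not_in_nbhd_self[OF sg] .
  then have disj: "(\<lambda>x. {w, x}) ` A \<inter> h ` P = {}"
    unfolding P_def h_def A_def by (auto simp: doubleton_eq_iff)
  have "card A + card P = card ((\<lambda>x. {w, x}) ` A) + card (h ` P)"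
    by (simp add: card_image inj_on_def h_def P_def A_def doubleton_eq_iff)
  also have "\<dots> = card ((\<lambda>x. {w, x}) ` A \<union> h ` P)"
    using disj finA finP by (simp add: card_Un_disjoint)
  also have "\<dots> \<le> card (cut_edges E X)"
  proof (rule card_mono[OF finite_cut_edges[OF sg]])
    show "(\<lambda>x. {w, x}) ` A \<union> h ` P \<subseteq> cut_edges E X"
      using assms(2) unfolding A_def P_def h_def cut_edges_def nbhd_def
      by (auto simp: insert_commute)
  qed
  finally show ?thesis using cardP unfolding A_def by simp
qed

lemma degree_le_card_cut_edges:
  assumes sg: "simple_graph V E" and ld: "locally_dirac V E" and "w \<in> V" "w \<in> X"
    and two: "2 \<le> card (nbhd E w - X)"
  shows "degree E w \<le> card (cut_edges E X)"
proof -
  define A where "A = nbhd E w - X"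
  define B where "B = nbhd E w \<inter> X"
  have finAB: "finite A" "finite B" using finite_nbhd[OF sg] unfolding A_def B_def by auto
  have "nbhd E w = A \<union> B" "A \<inter> B = {}" unfolding A_def B_def by auto
  then have deg: "degree E w = card A + card B"
    unfolding degree_def using finAB by (simp add: card_Un_disjoint)
  have common_split: "nbhd E x \<inter> nbhd E w \<subseteq> (nbhd E x \<inter> A) \<union> (nbhd E x \<inter> B)" for x
    unfolding A_def B_def by auto
  have dirac: "degree E w \<le> 2 * card (nbhd E x \<inter> nbhd E w)" if "x \<in> nbhd E w" for x
    using locally_dirac_common_nbhd[OF ld \<open>w \<in> V\<close> that] .
  show ?thesis
  proof (cases "degree E w \<le> 2 * card A")
    case True
    have "\<exists>z \<in> A. {y, z} \<in> E" if yB: "y \<in> B" for y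
    proof (rule ccontr)
      assume "\<not> ?thesis"
      then have "nbhd E y \<inter> nbhd E w \<subseteq> B - {y}"
        using common_split[of y] not_in_nbhd_self[OF sg, of y] by (auto simp: nbhd_def insert_commute)
      then have "card (nbhd E y \<inter> nbhd E w) \<le> card (B - {y})"
        using finAB by (intro card_mono) auto
      moreover have "card (B - {y}) = card B - 1" using finAB yB by simp
      moreover have "card B \<ge> 1" using yB finAB(2) by (auto simp: Suc_le_eq card_gt_0_iff)
      ultimately show False using dirac[of y] yB deg True unfolding B_def by auto
    qed
    then show ?thesis
      using degree_le_card_cut_edges_if_matched[OF sg \<open>w \<in> X\<close>] unfolding A_def B_def by blast
  next
    case False
    have each: "degree E w + 2 \<le> 2 * card (nbhd E x \<inter> B) + 2 * card A" if xA: "x \<in> A" for x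
    proof -
      have "nbhd E x \<inter> nbhd E w \<subseteq> (nbhd E x \<inter> B) \<union> (A - {x})"
        using common_split[of x] not_in_nbhd_self[OF sg, of x] by auto
      then have "card (nbhd E x \<inter> nbhd E w) \<le> card ((nbhd E x \<inter> B) \<union> (A - {x}))"
        using finAB by (intro card_mono) auto
      also have "\<dots> \<le> card (nbhd E x \<inter> B) + card (A - {x})" by (rule card_Un_le)
      finally have "card (nbhd E x \<inter> nbhd E w) \<le> card (nbhd E x \<inter> B) + card (A - {x})" .
      moreover have "card (A - {x}) = card A - 1" using xA finAB by simp
      moreover have "x \<in> nbhd E w" using xA unfolding A_def by simp
      ultimately show ?thesis using dirac[of x] two unfolding A_def by linarith
    qed
    define P where "P = (\<Sum>x\<in>A. card (nbhd E x \<inter> B))"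
    have "card A * (degree E w + 2) \<le> (\<Sum>x\<in>A. 2 * card (nbhd E x \<inter> B) + 2 * card A)"
      using sum_bounded_below[of A "degree E w + 2"] each by simp
    also have "\<dots> = 2 * P + 2 * card A * card A"
      by (simp add: P_def sum.distrib sum_distrib_left)
    finally have count: "card A * (degree E w + 2) \<le> 2 * P + 2 * card A * card A" .
    \<comment> \<open>\<open>2 (a + P) - 2 deg w \<ge> (a - 2) (deg w - 2a) \<ge> 0\<close>\<close>
    have "degree E w \<le> card A + P"
    proof -
      have "int (card A) * (int (degree E w) + 2) \<le> 2 * int P + 2 * int (card A) * int (card A)"
        using count by (metis (mono_tags) of_nat_add of_nat_le_iff of_nat_mult of_nat_numeral)
      moreover have "0 \<le> (int (degree E w) - 2 * int (card A)) * (int (card A) - 2)"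
        using False two unfolding A_def by simp
      ultimately show ?thesis by (simp add: algebra_simps)
    qed
    with card_cut_edges_ge_nbhd_count[OF sg \<open>w \<in> X\<close>] show ?thesis unfolding A_def B_def P_def by linarith
  qed
qed

lemma walk_crossing_edge:
  "is_walk V E p \<Longrightarrow> hd p \<notin> S \<Longrightarrow> last p \<in> S \<Longrightarrow> \<exists>x y. {x, y} \<in> E \<and> x \<notin> S \<and> y \<in> S"
  by (induction V E p rule: is_walk.induct) (auto split: if_splits)

lemma connected_graph_crossing_edge:
  assumes "connected_graph V E" "u \<in> V" "u \<notin> S" "w \<in> V" "w \<in> S"
  obtains x y where "{x, y} \<in> E" "x \<in> S" "y \<notin> S"
proof -
  obtain p where "is_walk V E p" "hd p = u" "last p = w"
    using assms unfolding connected_graph_def by blast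
  then obtain x y where "{x, y} \<in> E" "x \<notin> S" "y \<in> S"
    using walk_crossing_edge assms(3,5) by blast
  then show ?thesis using that[of y x] by (simp add: insert_commute)
qed

lemma not_connected_graph_closed_set:
  assumes sg: "simple_graph V E" and "V \<noteq> {}" "\<not> connected_graph V E"
  obtains S u w where "S \<subseteq> V" "u \<in> V" "u \<notin> S" "w \<in> S"
    "\<And>x y. x \<in> S \<Longrightarrow> {x, y} \<in> E \<Longrightarrow> y \<in> S"
proof -
  obtain u w where uw: "u \<in> V" "w \<in> V" and no_walk: "\<nexists>p. is_walk V E p \<and> hd p = u \<and> last p = w"
    using assms unfolding connected_graph_def by blast
  define S where "S = {x \<in> V. \<exists>p. is_walk V E p \<and> hd p = x \<and> last p = w}"
  have "S \<subseteq> V" unfolding S_def by blast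
  moreover have "w \<in> S" unfolding S_def using uw by (intro CollectI conjI exI[of _ "[w]"]) auto
  moreover have "u \<notin> S" using no_walk unfolding S_def by auto
  moreover have "y \<in> S" if "x \<in> S" "{x, y} \<in> E" for x y
  proof -
    obtain p where p: "is_walk V E p" "hd p = x" "last p = w" using \<open>x \<in> S\<close> unfolding S_def by blast
    then obtain ps where "p = x # ps" by (cases p) auto
    moreover have "y \<in> V" "{y, x} \<in> E" using simple_graph_edgeD[OF sg that(2)] that(2)
      by (auto simp: insert_commute)
    ultimately have "is_walk V E (y # p)" "hd (y # p) = y" "last (y # p) = w" using p by auto
    then show ?thesis unfolding S_def using \<open>y \<in> V\<close> by blast
  qed
  ultimately show ?thesis using that uw(1) by blast
qed

text \<open>If u is the only neighbour of v in S, the common neighbour of u and v provided by the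
  locally Dirac condition lies outside S, so u has two neighbours outside S.\<close>
lemma locally_dirac_crossing_edge_vertex:
  assumes sg: "simple_graph V E" and ld: "locally_dirac V E" and "S \<subseteq> V"
    and uv: "{u, v} \<in> E" "u \<in> S" "v \<notin> S"
  obtains w X where "w \<in> V" "w \<in> X" "X = S \<or> X = V - S" "2 \<le> card (nbhd E w - X)"
proof -
  have V: "u \<in> V" "v \<in> V" using simple_graph_edgeD[OF sg uv(1)] by auto
  have vu: "v \<in> nbhd E u" "u \<in> nbhd E v" using uv(1) unfolding nbhd_def by (auto simp: insert_commute)
  show ?thesis
  proof (cases "2 \<le> card (nbhd E v - (V - S))")
    case True
    then show ?thesis using that[of v "V - S"] V uv by blast
  next
    case False
    have "u \<in> nbhd E v - (V - S)" using vu uv by simp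
    moreover have "card (nbhd E v - (V - S)) \<le> Suc 0" using False by simp
    ultimately have only_u: "\<forall>x \<in> nbhd E v - (V - S). x = u"
      using card_le_Suc0_iff_eq[of "nbhd E v - (V - S)"] finite_nbhd[OF sg, of v] by blast
    have "degree E v \<ge> 1"
      using vu(2) finite_nbhd[OF sg, of v] unfolding degree_def by (auto simp: Suc_le_eq card_gt_0_iff)
    then have "card (nbhd E u \<inter> nbhd E v) \<ge> 1" using locally_dirac_common_nbhd[OF ld V(2) vu(2)] by linarith
    then have "nbhd E u \<inter> nbhd E v \<noteq> {}" by auto
    then obtain z where z: "z \<in> nbhd E u" "z \<in> nbhd E v" by blast
    have "z \<noteq> u" "z \<noteq> v" using z not_in_nbhd_self[OF sg] by blast+
    moreover have "z \<in> V" using z(2) nbhd_subset[OF sg] by blast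
    ultimately have "z \<notin> S" using only_u z(2) by blast
    then have "{v, z} \<subseteq> nbhd E u - S" using z vu uv by auto
    then have "card {v, z} \<le> card (nbhd E u - S)"
      using finite_nbhd[OF sg, of u] by (intro card_mono) auto
    then have "2 \<le> card (nbhd E u - S)" using \<open>z \<noteq> v\<close> by simp
    then show ?thesis using that[of u S] V uv by blast
  qed
qed

lemma min_degree_le_disconnecting_set:
  assumes sg: "simple_graph V E" and cg: "connected_graph V E" and ld: "locally_dirac V E"
    and "F \<subseteq> E" and "\<not> connected_graph V (E - F)"
  shows "min_degree V E \<le> card F"
proof -
  have "V \<noteq> {}" using cg unfolding connected_graph_def by simp
  obtain S u0 w0 where S: "S \<subseteq> V" "u0 \<in> V" "u0 \<notin> S" "w0 \<in> S"
    and closed: "\<And>x y. x \<in> S \<Longrightarrow> {x, y} \<in> E - F \<Longrightarrow> y \<in> S"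
    using not_connected_graph_closed_set[OF simple_graph_Diff[OF sg] \<open>V \<noteq> {}\<close> assms(5)] by blast
  have "w0 \<in> V" using S(1,4) by blast
  obtain u v where "{u, v} \<in> E" "u \<in> S" "v \<notin> S"
    by (rule connected_graph_crossing_edge[OF cg S(2,3) \<open>w0 \<in> V\<close> S(4)])
  then obtain w X where wX: "w \<in> V" "w \<in> X" "X = S \<or> X = V - S" "2 \<le> card (nbhd E w - X)"
    using locally_dirac_crossing_edge_vertex[OF sg ld S(1)] by blast
  have "cut_edges E S \<subseteq> F" by (rule cut_edges_subset_if_closed[OF sg]) (rule closed)
  then have "cut_edges E X \<subseteq> F" using wX(3) cut_edges_complement[OF sg] by auto
  then have "card (cut_edges E X) \<le> card F"
    using card_mono[OF finite_subset[OF assms(4) simple_graph_finite_edges[OF sg]]] by blast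
  moreover have "degree E w \<le> card (cut_edges E X)"
    using degree_le_card_cut_edges[OF sg ld wX(1,2,4)] .
  ultimately show ?thesis using min_degree_le[OF sg wX(1)] by linarith
qed

lemma card_edges_at_vertex:
  assumes "simple_graph V E"
  shows "card {e \<in> E. w \<in> e} = degree E w"
proof -
  have "{e \<in> E. w \<in> e} = (\<lambda>z. {z, w}) ` nbhd E w"
  proof (intro equalityI subsetI)
    fix e assume e: "e \<in> {e \<in> E. w \<in> e}"
    then have "card e = 2" using assms unfolding simple_graph_def by auto
    then obtain a b where "e = {a, b}" by (meson card_2_iff)
    then have "e = {a, w} \<or> e = {b, w}" using e by (auto simp: insert_commute)
    then show "e \<in> (\<lambda>z. {z, w}) ` nbhd E w" using e unfolding nbhd_def by auto
  qed (auto simp: nbhd_def)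
  then show ?thesis unfolding degree_def
    by (simp add: card_image inj_on_def doubleton_eq_iff)
qed

lemma isolating_vertex_disconnects:
  assumes "simple_graph V E" "w \<in> V" "2 \<le> card V"
  shows "\<not> connected_graph V (E - {e \<in> E. w \<in> e})"
proof
  assume cg: "connected_graph V (E - {e \<in> E. w \<in> e})"
  have "V \<noteq> {w}" using assms(3) by auto
  then obtain t where "t \<in> V" "t \<noteq> w" using assms(2) by blast
  then obtain p where p: "is_walk V (E - {e \<in> E. w \<in> e}) p" "hd p = w" "last p = t"
    using cg assms(2) unfolding connected_graph_def by blast
  obtain ps where "p = w # ps" using p(1,2) by (cases p) auto
  moreover from this have "ps \<noteq> []" using p(3) \<open>t \<noteq> w\<close> by auto
  ultimately show False using p(1) by (cases ps) auto
qed

theorem mainTheorem10: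
  fixes V :: "'a set" and E :: "'a set set"
  assumes "simple_graph V E"
    and "connected_graph V E"
    and "locally_dirac V E"
    and "card V \<ge> 3"
  shows "edge_connectivity V E = min_degree V E"
proof -
  define M where "M = {card F | F. F \<subseteq> E \<and> (\<not> connected_graph V (E - F) \<or> card V \<le> 1)}"
  have "M \<subseteq> card ` Pow E" unfolding M_def by blast
  then have "finite M"
    using simple_graph_finite_edges[OF assms(1)] by (meson finite_Pow_iff finite_imageI finite_subset)
  moreover have "\<forall>m \<in> M. min_degree V E \<le> m"
    using min_degree_le_disconnecting_set[OF assms(1-3)] assms(4) unfolding M_def by auto
  moreover have "min_degree V E \<in> M"
  proof -
    have "finite V" "V \<noteq> {}" using assms(1,4) unfolding simple_graph_def by auto
    then have "min_degree V E \<in> degree E ` V" unfolding min_degree_def by simp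
    then obtain w where w: "w \<in> V" "degree E w = min_degree V E" by auto
    have "\<not> connected_graph V (E - {e \<in> E. w \<in> e})"
      using isolating_vertex_disconnects[OF assms(1) w(1)] assms(4) by simp
    then have "card {e \<in> E. w \<in> e} \<in> M" unfolding M_def by blast
    then show ?thesis using card_edges_at_vertex[OF assms(1)] w(2) by simp
  qed
  ultimately show ?thesis unfolding edge_connectivity_def M_def[symmetric] using Min_eqI by blast
qed

end
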